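(* Let $\gamma_*\in(0,1)$, $\zeta_*\in(0,\tfrac12)$, and $\varepsilon\in(0,\tfrac23\zeta_* )$. Set $\zeta=\zeta_*-\varepsilon$ and $\gamma=\gamma_*\frac{\zeta_*}{\zeta}$. Let $P_0$ be the Gaussian mixture $(1-\zeta_* )\mathcal{N}(0,1)+\zeta_*\mathcal{N}(\gamma_*,1)$ and $P_1$ the Gaussian mixture $(1-\zeta)\mathcal{N}(0,1)+\zeta\mathcal{N}(\gamma,1)$. Then there is an absolute constant $C>0$ such that \[ \mathrm{KL}(P_1,P_0)\le C\,\varepsilon^2\gamma_*^4. \]
   Context: $\mathrm{KL}(P_1,P_0)=\int \log\frac{dP_1}{dP_0}\,dP_1$ denotes the Kullback–Leibler divergence. *)

theory Defs
  imports "HOL-Probability.Probability"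
begin

definition mix_density :: "real \<Rightarrow> real \<Rightarrow> real \<Rightarrow> real" where
  "mix_density z g x = (1 - z) * normal_density 0 1 x + z * normal_density g 1 x"

definition gauss_mix :: "real \<Rightarrow> real \<Rightarrow> real measure" where
  "gauss_mix z g = density lborel (\<lambda>x. ennreal (mix_density z g x))"

end

theory Submission
  imports Defs
begin

(* The Kullback-Leibler divergence is dominated by the chi-square divergence, and since
   the density p0 of P0 is at least half the standard normal density phi,
   KL(P1, P0) <= 2 * integral (p1 - p0)^2 / phi.  The difference p1 - p0 is a signed
   combination of unit-variance Gaussians, and the identity
   phi_a * phi_b / phi = e^(a b) * phi_(a+b) turns this integral into sum_k m_k^2 / k!,
   where m_k is the k-th moment of the signed mixing measure.  Its mass m_0 vanishes, and
   zeta * gamma = zeta_* * gamma_* says that P1 and P0 have the same mean, so that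
   m_(k+1) = zeta_* gamma_* (gamma^k - gamma_*^k) = O(epsilon gamma_*^2 4^k). *)

lemma normal_density_mult_divide:
  "normal_density a 1 x * normal_density b 1 x / normal_density 0 1 x
     = exp (a * b) * normal_density (a + b) 1 x"
proof -
  have "exp (-(x - a)\<^sup>2/2) * exp (-(x - b)\<^sup>2/2) / exp (-x\<^sup>2/2) = exp (a * b) * exp (-(x - (a + b))\<^sup>2/2)"
    unfolding exp_add[symmetric] exp_diff[symmetric]
    by (rule arg_cong[where f=exp]) (simp add: power2_eq_square field_simps)
  then show ?thesis
    unfolding normal_density_def by (simp add: field_simps)
qed

lemma exp_sums: "(\<lambda>n. x ^ n / fact n) sums exp (x :: real)"
  using exp_converges[of x] by (simp add: divide_inverse mult.commute)

lemma sums_square_moments_div_fact: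
  fixes c a :: "'i \<Rightarrow> real"
  shows "(\<lambda>k. (\<Sum>i\<in>I. c i * a i ^ k)\<^sup>2 / fact k) sums (\<Sum>i\<in>I. \<Sum>j\<in>I. c i * c j * exp (a i * a j))"
proof -
  have "(\<Sum>i\<in>I. c i * a i ^ k)\<^sup>2 / fact k = (\<Sum>i\<in>I. \<Sum>j\<in>I. c i * c j * ((a i * a j) ^ k / fact k))" for k
    by (simp add: power2_eq_square sum_product sum_divide_distrib power_mult_distrib mult_ac)
  then show ?thesis
    by (simp only:) (intro sums_sum sums_mult exp_sums)
qed

lemma has_bochner_integral_gaussian_chi_square:
  fixes c a :: "'i \<Rightarrow> real"
  shows "has_bochner_integral lborel
    (\<lambda>x. (\<Sum>i\<in>I. c i * normal_density (a i) 1 x)\<^sup>2 / normal_density 0 1 x)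
    (\<Sum>k. (\<Sum>i\<in>I. c i * a i ^ k)\<^sup>2 / fact k)"
proof -
  have "(\<Sum>i\<in>I. c i * normal_density (a i) 1 x)\<^sup>2 / normal_density 0 1 x
      = (\<Sum>i\<in>I. \<Sum>j\<in>I. c i * c j * (exp (a i * a j) * normal_density (a i + a j) 1 x))" for x
    by (simp add: power2_eq_square sum_product sum_divide_distrib mult_ac flip: normal_density_mult_divide)
  moreover have "has_bochner_integral lborel
      (\<lambda>x. \<Sum>i\<in>I. \<Sum>j\<in>I. c i * c j * (exp (a i * a j) * normal_density (a i + a j) 1 x))
      (\<Sum>i\<in>I. \<Sum>j\<in>I. c i * c j * (exp (a i * a j) * 1))"
    by (intro has_bochner_integral_sum has_bochner_integral_mult_right)
      (simp add: has_bochner_integral_iff)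
  moreover have "(\<Sum>i\<in>I. \<Sum>j\<in>I. c i * c j * exp (a i * a j)) = (\<Sum>k. (\<Sum>i\<in>I. c i * a i ^ k)\<^sup>2 / fact k)"
    using sums_square_moments_div_fact by (rule sums_unique)
  ultimately show ?thesis
    by simp
qed

lemma power_diff_le:
  fixes x y :: real
  assumes "0 \<le> y" "y \<le> x"
  shows "x ^ n - y ^ n \<le> (1 + x) ^ n * (x - y)"
proof (induction n)
  case 0
  then show ?case using assms by simp
next
  case (Suc n)
  have "y ^ n \<le> (1 + x) ^ n"
    using assms by (intro power_mono) auto
  then have "y ^ n * (x - y) \<le> (1 + x) ^ n * (x - y)"
    using assms by (intro mult_right_mono) auto
  moreover have "x * (x ^ n - y ^ n) \<le> x * ((1 + x) ^ n * (x - y))"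
    using Suc assms by (intro mult_left_mono) auto
  ultimately have "x * (x ^ n - y ^ n) + y ^ n * (x - y) \<le> (1 + x) ^ Suc n * (x - y)"
    by (simp add: algebra_simps)
  then show ?case
    by (simp add: algebra_simps)
qed

lemma suminf_square_div_fact_le:
  fixes m :: "nat \<Rightarrow> real"
  assumes "m 0 = 0" and bound: "\<And>n. \<bar>m (Suc n)\<bar> \<le> B * R ^ n"
  shows "(\<Sum>k. (m k)\<^sup>2 / fact k) \<le> B\<^sup>2 * exp (R\<^sup>2)"
proof -
  have le: "(m (Suc n))\<^sup>2 / fact (Suc n) \<le> B\<^sup>2 * ((R\<^sup>2) ^ n / fact n)" for n
  proof -
    have "(m (Suc n))\<^sup>2 \<le> (B * R ^ n)\<^sup>2"
      using bound[of n] by (metis abs_ge_zero power2_abs power_mono)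
    then have "(m (Suc n))\<^sup>2 / fact (Suc n) \<le> (B * R ^ n)\<^sup>2 / fact (Suc n)"
      by (intro divide_right_mono) auto
    also have "\<dots> \<le> (B * R ^ n)\<^sup>2 / fact n"
      by (intro divide_left_mono) (auto simp: fact_mono)
    also have "\<dots> = B\<^sup>2 * ((R\<^sup>2) ^ n / fact n)"
      by (simp add: power2_eq_square power_mult_distrib)
    finally show ?thesis .
  qed
  have dom: "(\<lambda>n. B\<^sup>2 * ((R\<^sup>2) ^ n / fact n)) sums (B\<^sup>2 * exp (R\<^sup>2))"
    by (rule sums_mult[OF exp_sums])
  have "summable (\<lambda>n. (m (Suc n))\<^sup>2 / fact (Suc n))"
  proof (rule summable_comparison_test'[OF sums_summable[OF dom]])
    show "norm ((m (Suc n))\<^sup>2 / fact (Suc n)) \<le> B\<^sup>2 * ((R\<^sup>2) ^ n / fact n)" for n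
      using le[of n] by simp
  qed
  then have "(\<lambda>k. (m k)\<^sup>2 / fact k) sums (\<Sum>k. (m k)\<^sup>2 / fact k)"
    using summable_Suc_iff[of "\<lambda>k. (m k)\<^sup>2 / fact k"] by (simp add: summable_sums)
  then have "(\<lambda>n. (m (Suc n))\<^sup>2 / fact (Suc n)) sums (\<Sum>k. (m k)\<^sup>2 / fact k)"
    using sums_Suc_iff[of "\<lambda>k. (m k)\<^sup>2 / fact k"] assms(1) by simp
  then show ?thesis
    by (rule sums_le[OF le _ dom])
qed

lemma (in sigma_finite_measure) KL_density_le_chi_square:
  fixes f g :: "'a \<Rightarrow> real"
  assumes f: "f \<in> borel_measurable M" "\<And>x. x \<in> space M \<Longrightarrow> 0 < f x" "integrable M f"
    and g: "g \<in> borel_measurable M" "\<And>x. x \<in> space M \<Longrightarrow> 0 \<le> g x" "integrable M g"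
    and mass: "(\<integral>x. f x \<partial>M) = (\<integral>x. g x \<partial>M)"
    and chi: "integrable M (\<lambda>x. (g x - f x)\<^sup>2 / f x)"
  shows "KL_divergence (exp 1) (density M f) (density M g) \<le> (\<integral>x. (g x - f x)\<^sup>2 / f x \<partial>M)"
proof -
  have KL: "KL_divergence (exp 1) (density M f) (density M g) = (\<integral>x. g x * ln (g x / f x) \<partial>M)"
  proof (subst KL_density_density)
    show "AE x in M. f x = 0 \<longrightarrow> g x = 0"
      using f(2) by (intro AE_I2) (metis less_irrefl)
  qed (use f g in \<open>auto simp: log_def less_imp_le\<close>)
  have pointwise: "g x * ln (g x / f x) \<le> (g x - f x)\<^sup>2 / f x + (g x - f x)" if "x \<in> space M" for x
  proof (cases "g x = 0")
    case False
    then have "0 < g x"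
      using g(2)[OF that] by simp
    then have "g x * ln (g x / f x) \<le> g x * (g x / f x - 1)"
      using f(2)[OF that] by (intro mult_left_mono ln_le_minus_one) auto
    also have "\<dots> = (g x - f x)\<^sup>2 / f x + (g x - f x)"
      using f(2)[OF that] by (simp add: field_simps power2_eq_square)
    finally show ?thesis .
  qed (use f(2)[OF that] in \<open>simp add: power2_eq_square\<close>)
  have chi_nonneg: "0 \<le> (\<integral>x. (g x - f x)\<^sup>2 / f x \<partial>M)"
    using f(2) by (intro integral_nonneg_AE AE_I2) (auto simp: less_imp_le)
  show ?thesis
  proof (cases "integrable M (\<lambda>x. g x * ln (g x / f x))")
    case True
    then have "(\<integral>x. g x * ln (g x / f x) \<partial>M) \<le> (\<integral>x. (g x - f x)\<^sup>2 / f x + (g x - f x) \<partial>M)"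
      using chi f g pointwise by (intro integral_mono Bochner_Integration.integrable_add Bochner_Integration.integrable_diff)
    also have "\<dots> = (\<integral>x. (g x - f x)\<^sup>2 / f x \<partial>M) + ((\<integral>x. g x \<partial>M) - (\<integral>x. f x \<partial>M))"
      using chi f g by (simp add: Bochner_Integration.integral_add Bochner_Integration.integral_diff)
    finally show ?thesis
      using KL mass by simp
  next
    case False
    then show ?thesis
      using KL chi_nonneg by (simp add: not_integrable_integral_eq)
  qed
qed

lemma mix_density_nonneg: "0 \<le> z \<Longrightarrow> z \<le> 1 \<Longrightarrow> 0 \<le> mix_density z g x"
  unfolding mix_density_def by simp

lemma mix_density_ge_half:
  assumes "0 \<le> z" "z \<le> 1/2"
  shows "normal_density 0 1 x / 2 \<le> mix_density z g x"
proof -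
  have "normal_density 0 1 x / 2 \<le> (1 - z) * normal_density 0 1 x"
    using assms mult_right_mono[of "1/2" "1 - z" "normal_density 0 1 x"] by simp
  moreover have "0 \<le> z * normal_density g 1 x"
    using assms by simp
  ultimately show ?thesis
    unfolding mix_density_def by linarith
qed

lemma borel_measurable_mix_density [measurable]: "mix_density z g \<in> borel_measurable borel"
  unfolding mix_density_def[abs_def] by measurable

lemma has_bochner_integral_mix_density: "has_bochner_integral lborel (mix_density z g) 1"
proof -
  have "has_bochner_integral lborel (mix_density z g) ((1 - z) * 1 + z * 1)"
    unfolding mix_density_def[abs_def]
    by (intro has_bochner_integral_add has_bochner_integral_mult_right) (simp_all add: has_bochner_integral_iff)
  then show ?thesis
    by simp
qed

lemma has_bochner_integral_mix_density_chi_square: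
  "has_bochner_integral lborel (\<lambda>x. (mix_density z g x - mix_density zs gs x)\<^sup>2 / normal_density 0 1 x)
    (\<Sum>k. (z * g ^ k - zs * gs ^ k + (zs - z) * 0 ^ k)\<^sup>2 / fact k)"
proof -
  define c where "c = (\<lambda>i::nat. [z, - zs, zs - z] ! i)"
  define a where "a = (\<lambda>i::nat. [g, gs, 0] ! i)"
  have "mix_density z g x - mix_density zs gs x = (\<Sum>i\<in>{0,1,2}. c i * normal_density (a i) 1 x)" for x
    by (simp add: c_def a_def mix_density_def algebra_simps)
  moreover have "(\<Sum>i\<in>{0,1,2}. c i * a i ^ k) = z * g ^ k - zs * gs ^ k + (zs - z) * 0 ^ k" for k
    by (simp add: c_def a_def)
  ultimately show ?thesis
    using has_bochner_integral_gaussian_chi_square[of c a "{0,1,2}"] by simp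
qed

lemma KL_gauss_mix_le_moment_series:
  assumes "0 \<le> zs" "zs \<le> 1/2" "0 \<le> z" "z \<le> 1"
  shows "KL_divergence (exp 1) (gauss_mix zs gs) (gauss_mix z g)
    \<le> 2 * (\<Sum>k. (z * g ^ k - zs * gs ^ k + (zs - z) * 0 ^ k)\<^sup>2 / fact k)"
proof -
  let ?f = "mix_density zs gs" and ?g = "mix_density z g"
  let ?chi = "\<lambda>x. (?g x - ?f x)\<^sup>2 / normal_density 0 1 x"
  have chi: "has_bochner_integral lborel (\<lambda>x. 2 * ?chi x)
      (2 * (\<Sum>k. (z * g ^ k - zs * gs ^ k + (zs - z) * 0 ^ k)\<^sup>2 / fact k))"
    by (intro has_bochner_integral_mult_right has_bochner_integral_mix_density_chi_square)
  then have chi_int: "integrable lborel (\<lambda>x. 2 * ?chi x)"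
    by (simp add: has_bochner_integral_iff)
  have f_pos: "0 < ?f x" for x
    using normal_density_pos[of 1 0 x] mix_density_ge_half[of zs x gs] assms by simp
  have dom: "(?g x - ?f x)\<^sup>2 / ?f x \<le> 2 * ?chi x" for x
  proof -
    have "(?g x - ?f x)\<^sup>2 / ?f x \<le> (?g x - ?f x)\<^sup>2 / (normal_density 0 1 x / 2)"
      using f_pos[of x] normal_density_pos[of 1 0 x] mix_density_ge_half[of zs x gs] assms
      by (intro divide_left_mono mult_pos_pos) auto
    then show ?thesis
      by (simp add: mult.commute)
  qed
  have int: "integrable lborel (\<lambda>x. (?g x - ?f x)\<^sup>2 / ?f x)"
  proof (rule Bochner_Integration.integrable_bound[OF chi_int])
    show "(\<lambda>x. (?g x - ?f x)\<^sup>2 / ?f x) \<in> borel_measurable lborel"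
      by measurable
    show "AE x in lborel. norm ((?g x - ?f x)\<^sup>2 / ?f x) \<le> norm (2 * ?chi x)"
      using f_pos dom by (intro AE_I2) (simp add: less_imp_le)
  qed
  have "KL_divergence (exp 1) (gauss_mix zs gs) (gauss_mix z g) \<le> (\<integral>x. (?g x - ?f x)\<^sup>2 / ?f x \<partial>lborel)"
    unfolding gauss_mix_def
  proof (rule lborel.KL_density_le_chi_square)
    show "?f \<in> borel_measurable lborel" "?g \<in> borel_measurable lborel"
      by simp_all
    show "0 < ?f x" "0 \<le> ?g x" for x
      using f_pos assms by (simp_all add: mix_density_nonneg)
    show "integrable lborel ?f" "integrable lborel ?g" "(\<integral>x. ?f x \<partial>lborel) = (\<integral>x. ?g x \<partial>lborel)"
      using has_bochner_integral_mix_density by (simp_all add: has_bochner_integral_iff)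
  qed (fact int)
  also have "\<dots> \<le> (\<integral>x. 2 * ?chi x \<partial>lborel)"
    by (rule integral_mono[OF int chi_int dom])
  also have "\<dots> = 2 * (\<Sum>k. (z * g ^ k - zs * gs ^ k + (zs - z) * 0 ^ k)\<^sup>2 / fact k)"
    using chi by (simp add: has_bochner_integral_iff)
  finally show ?thesis .
qed

lemma equal_mean_moment_le:
  fixes z zs g gs :: real
  assumes "0 \<le> gs" "gs \<le> g" "g \<le> 3" "0 \<le> zs" "z * g = zs * gs"
  shows "\<bar>z * g ^ Suc n - zs * gs ^ Suc n + w * 0 ^ Suc n\<bar> \<le> zs * gs * (g - gs) * 4 ^ n"
proof -
  have "z * g ^ Suc n - zs * gs ^ Suc n + w * 0 ^ Suc n = zs * gs * (g ^ n - gs ^ n)"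
    using assms(5) by (simp add: algebra_simps)
  moreover have "0 \<le> g ^ n - gs ^ n"
    using assms by (simp add: power_mono)
  ultimately have "\<bar>z * g ^ Suc n - zs * gs ^ Suc n + w * 0 ^ Suc n\<bar> = zs * gs * (g ^ n - gs ^ n)"
    using assms by simp
  also have "\<dots> \<le> zs * gs * ((1 + g) ^ n * (g - gs))"
    using assms by (intro mult_left_mono power_diff_le) auto
  also have "\<dots> \<le> zs * gs * (g - gs) * 4 ^ n"
    using assms power_mono[of "1 + g" 4 n] by (simp add: mult_ac mult_left_mono)
  finally show ?thesis .
qed

lemma KL_gauss_mix_equal_mean_le:
  fixes \<gamma>s \<zeta>s \<epsilon> :: real
  assumes "0 < \<gamma>s" "\<gamma>s < 1" "0 < \<zeta>s" "\<zeta>s < 1/2" "0 < \<epsilon>" "\<epsilon> < 2/3 * \<zeta>s"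
  shows "KL_divergence (exp 1) (gauss_mix \<zeta>s \<gamma>s) (gauss_mix (\<zeta>s - \<epsilon>) (\<gamma>s * \<zeta>s / (\<zeta>s - \<epsilon>)))
    \<le> 18 * exp 16 * \<epsilon>\<^sup>2 * \<gamma>s ^ 4"
proof -
  define \<zeta> where "\<zeta> = \<zeta>s - \<epsilon>"
  define \<gamma> where "\<gamma> = \<gamma>s * \<zeta>s / \<zeta>"
  have \<zeta>: "0 < \<zeta>" "\<zeta> < 1" "\<zeta>s / \<zeta> \<le> 3"
    using assms by (auto simp: \<zeta>_def divide_le_eq)
  have \<gamma>_ge: "\<gamma>s \<le> \<gamma>"
    using assms \<zeta> by (simp add: \<gamma>_def \<zeta>_def field_simps)
  have \<gamma>_le: "\<gamma> \<le> 3"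
    using assms \<zeta> mult_mono[of \<gamma>s 1 "\<zeta>s / \<zeta>" 3] by (simp add: \<gamma>_def)
  have gap: "\<zeta>s * \<gamma>s * (\<gamma> - \<gamma>s) \<le> 3 * \<epsilon> * \<gamma>s\<^sup>2"
  proof -
    have "\<zeta>s * \<gamma>s * (\<gamma> - \<gamma>s) = \<epsilon> * \<gamma>s\<^sup>2 * (\<zeta>s / \<zeta>)"
      using \<zeta> by (simp add: \<gamma>_def \<zeta>_def field_simps power2_eq_square)
    also have "\<dots> \<le> \<epsilon> * \<gamma>s\<^sup>2 * 3"
      using assms \<zeta> by (intro mult_left_mono) auto
    finally show ?thesis
      by simp
  qed
  have moment: "\<bar>\<zeta> * \<gamma> ^ Suc n - \<zeta>s * \<gamma>s ^ Suc n + (\<zeta>s - \<zeta>) * 0 ^ Suc n\<bar> \<le> 3 * \<epsilon> * \<gamma>s\<^sup>2 * 4 ^ n"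
    for n
  proof -
    have "\<zeta> * \<gamma> = \<zeta>s * \<gamma>s"
      using \<zeta> by (simp add: \<gamma>_def)
    then have "\<bar>\<zeta> * \<gamma> ^ Suc n - \<zeta>s * \<gamma>s ^ Suc n + (\<zeta>s - \<zeta>) * 0 ^ Suc n\<bar> \<le> \<zeta>s * \<gamma>s * (\<gamma> - \<gamma>s) * 4 ^ n"
      using assms \<gamma>_ge \<gamma>_le by (intro equal_mean_moment_le) auto
    also have "\<dots> \<le> 3 * \<epsilon> * \<gamma>s\<^sup>2 * 4 ^ n"
      using gap by (intro mult_right_mono) auto
    finally show ?thesis .
  qed
  have "KL_divergence (exp 1) (gauss_mix \<zeta>s \<gamma>s) (gauss_mix \<zeta> \<gamma>)
      \<le> 2 * (\<Sum>k. (\<zeta> * \<gamma> ^ k - \<zeta>s * \<gamma>s ^ k + (\<zeta>s - \<zeta>) * 0 ^ k)\<^sup>2 / fact k)"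
    using assms \<zeta> by (intro KL_gauss_mix_le_moment_series) auto
  also have "\<dots> \<le> 2 * ((3 * \<epsilon> * \<gamma>s\<^sup>2)\<^sup>2 * exp (4\<^sup>2))"
    using moment by (intro mult_left_mono suminf_square_div_fact_le) auto
  also have "\<dots> = 18 * exp 16 * \<epsilon>\<^sup>2 * \<gamma>s ^ 4"
    by (simp add: power_mult_distrib flip: power_mult)
  finally show ?thesis
    by (simp add: \<zeta>_def \<gamma>_def)
qed

theorem lemma10:
  shows "\<exists>C>0. \<forall>\<gamma>s \<zeta>s \<epsilon> :: real.
    0 < \<gamma>s \<and> \<gamma>s < 1 \<and> 0 < \<zeta>s \<and> \<zeta>s < 1/2 \<and> 0 < \<epsilon> \<and> \<epsilon> < 2/3 * \<zeta>s \<longrightarrow>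
    (let \<zeta> = \<zeta>s - \<epsilon>; \<gamma> = \<gamma>s * \<zeta>s / \<zeta> in
      KL_divergence (exp 1) (gauss_mix \<zeta>s \<gamma>s) (gauss_mix \<zeta> \<gamma>)
        \<le> C * \<epsilon>^2 * \<gamma>s^4)"
  using KL_gauss_mix_equal_mean_le by (intro exI[of _ "18 * exp 16"]) (simp add: Let_def)

end
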